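(* Let $n\ge 2$, let $G=P_n$ be a path all of whose edges have weight $p\in(0,1)$, and let $\alpha\in(0,1)$. Then $\operatorname{cptw}(G,\alpha)$ is the minimum value of $m$ for which \[\sum_{s=n-1}^{m}\binom{m}{s}p^s(1-p)^{m-s}\ \ge\ \alpha.\]
   Context: Let $G$ be a finite simple graph in which each edge $uv$ has a weight $w_{uv}\in(0,1)$. Weighted zero forcing: start with a set $B\subseteq V(G)$ of blue vertices, all other vertices white. In each round, simultaneously, for every blue vertex $u$ that has exactly one white neighbor $v$ (with respect to the coloring at the start of the round), $u$ attempts to force $v$, succeeding with probability $w_{uv}$, all attempts being independent; a white vertex becomes blue at the end of the round if at least one attempt on it succeeds. $B$ is a weighted zero forcing set of $G$ if this process can eventually color all of $V(G)$ blue (equivalently, $B$ is a zero forcing set of the underlying unweighted graph under the standard rule); $\operatorname{Z}(G)$ is the minimum size of such a set. $\operatorname{ptw}(G,B)$ is the random variable giving the round in which the last white vertex becomes blue ($0$ if $B=V(G)$). For $\alpha\in(0,1)$, $\operatorname{cptw}(G,B,\alpha)$ is the least $t\ge 0$ with $\Pr(\operatorname{ptw}(G,B)\le t)\ge\alpha$, and $\operatorname{cptw}(G,\alpha)$ is the minimum of $\operatorname{cptw}(G,B,\alpha)$ over weighted zero forcing sets $B$ with $|B|=\operatorname{Z}(G)$. *)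

theory Defs
  imports "HOL-Probability.Probability"
begin

(* A finite simple graph is given by a finite vertex set V and a symmetric,
   irreflexive adjacency relation E; edge weights by w :: 'a => 'a => real
   (only the values w u v on edges uv matter). *)

inductive_set zf_closure :: "'a set \<Rightarrow> ('a \<Rightarrow> 'a \<Rightarrow> bool) \<Rightarrow> 'a set \<Rightarrow> 'a set"
  for V E B where
  base: "b \<in> B \<Longrightarrow> b \<in> zf_closure V E B"
| force: "\<lbrakk>u \<in> zf_closure V E B; v \<in> V; E u v;
           \<forall>x\<in>V. E u x \<and> x \<noteq> v \<longrightarrow> x \<in> zf_closure V E B\<rbrakk>
          \<Longrightarrow> v \<in> zf_closure V E B"

definition zero_forcing_set :: "'a set \<Rightarrow> ('a \<Rightarrow> 'a \<Rightarrow> bool) \<Rightarrow> 'a set \<Rightarrow> bool" where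
  "zero_forcing_set V E B \<longleftrightarrow> B \<subseteq> V \<and> V \<subseteq> zf_closure V E B"

definition Z_num :: "'a set \<Rightarrow> ('a \<Rightarrow> 'a \<Rightarrow> bool) \<Rightarrow> nat" where
  "Z_num V E = Min (card ` {B. zero_forcing_set V E B})"

definition force_attempts :: "'a set \<Rightarrow> ('a \<Rightarrow> 'a \<Rightarrow> bool) \<Rightarrow> 'a set \<Rightarrow> ('a \<times> 'a) set" where
  "force_attempts V E S =
     {(u, v). u \<in> S \<and> v \<in> V \<and> v \<notin> S \<and> E u v \<and>
              (\<forall>x\<in>V. E u x \<and> x \<notin> S \<longrightarrow> x = v)}"

definition wzf_step :: "'a set \<Rightarrow> ('a \<Rightarrow> 'a \<Rightarrow> bool) \<Rightarrow> ('a \<Rightarrow> 'a \<Rightarrow> real) \<Rightarrow> 'a set \<Rightarrow> 'a set pmf" where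
  "wzf_step V E w S =
     map_pmf (\<lambda>f. S \<union> {v. \<exists>u. (u, v) \<in> force_attempts V E S \<and> f (u, v)})
       (Pi_pmf (force_attempts V E S) False (\<lambda>(u, v). bernoulli_pmf (w u v)))"

primrec wzf_dist :: "'a set \<Rightarrow> ('a \<Rightarrow> 'a \<Rightarrow> bool) \<Rightarrow> ('a \<Rightarrow> 'a \<Rightarrow> real) \<Rightarrow> 'a set \<Rightarrow> nat \<Rightarrow> 'a set pmf" where
  "wzf_dist V E w B 0 = return_pmf B"
| "wzf_dist V E w B (Suc t) = bind_pmf (wzf_dist V E w B t) (wzf_step V E w)"

definition prob_ptw_le :: "'a set \<Rightarrow> ('a \<Rightarrow> 'a \<Rightarrow> bool) \<Rightarrow> ('a \<Rightarrow> 'a \<Rightarrow> real) \<Rightarrow> 'a set \<Rightarrow> nat \<Rightarrow> real" where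
  "prob_ptw_le V E w B t = measure_pmf.prob (wzf_dist V E w B t) {V}"

definition cptw_set :: "'a set \<Rightarrow> ('a \<Rightarrow> 'a \<Rightarrow> bool) \<Rightarrow> ('a \<Rightarrow> 'a \<Rightarrow> real) \<Rightarrow> 'a set \<Rightarrow> real \<Rightarrow> nat" where
  "cptw_set V E w B \<alpha> = (LEAST t. prob_ptw_le V E w B t \<ge> \<alpha>)"

definition cptw :: "'a set \<Rightarrow> ('a \<Rightarrow> 'a \<Rightarrow> bool) \<Rightarrow> ('a \<Rightarrow> 'a \<Rightarrow> real) \<Rightarrow> real \<Rightarrow> nat" where
  "cptw V E w \<alpha> =
     Min ((\<lambda>B. cptw_set V E w B \<alpha>) ` {B. zero_forcing_set V E B \<and> card B = Z_num V E})"

definition path_V :: "nat \<Rightarrow> nat set" where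
  "path_V n = {..<n}"

definition path_E :: "nat \<Rightarrow> nat \<Rightarrow> bool" where
  "path_E i j \<longleftrightarrow> j = Suc i \<or> i = Suc j"

end

theory Submission
  imports Defs
begin

text \<open>The zero forcing number of \<open>P\<^sub>n\<close> is 1 and the only zero forcing sets of
size 1 are the two endpoints. Started from an endpoint, the blue vertices always form a
subpath with exactly one forcing attempt per round until the whole path is blue; each
attempt succeeds independently with probability \<open>p\<close>. Hence after \<open>t\<close> rounds the
number of additional blue vertices is \<open>min X (n - 1)\<close> with \<open>X ~ Bin(t, p)\<close>, and the
path is completely blue exactly when \<open>X \<ge> n - 1\<close>.\<close>

lemma force_attempts_all_blue: "force_attempts V E V = {}"
  unfolding force_attempts_def by auto

lemma mem_force_attempts_iff:
  "(u, v) \<in> force_attempts V E S \<longleftrightarrow>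
     u \<in> S \<and> v \<in> V \<and> v \<notin> S \<and> E u v \<and> (\<forall>x\<in>V. E u x \<and> x \<notin> S \<longrightarrow> x = v)"
  unfolding force_attempts_def by simp

lemma zf_closure_empty: "zf_closure V E {} = {}"
proof -
  have "x \<notin> zf_closure V E {}" for x
  proof
    assume "x \<in> zf_closure V E {}"
    then show False by (induction rule: zf_closure.induct) auto
  qed
  then show ?thesis by blast
qed

definition forcing_chain ::
    "'a set \<Rightarrow> ('a \<Rightarrow> 'a \<Rightarrow> bool) \<Rightarrow> (nat \<Rightarrow> 'a set) \<Rightarrow> (nat \<Rightarrow> 'a) \<Rightarrow> (nat \<Rightarrow> 'a) \<Rightarrow> nat \<Rightarrow> bool"
  where "forcing_chain V E S a b N \<longleftrightarrow>
    (\<forall>k<N. force_attempts V E (S k) = {(a k, b k)} \<and> S (Suc k) = insert (b k) (S k)) \<and>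
    force_attempts V E (S N) = {}"

lemma forcing_chain_mono:
  assumes "forcing_chain V E S a b N" "i \<le> j" "j \<le> N"
  shows "S i \<subseteq> S j"
  using assms(2,3)
proof (induction j rule: dec_induct)
  case (step j)
  then show ?case using assms(1) unfolding forcing_chain_def by auto
qed simp

lemma forcing_chain_stage_neq_final:
  assumes chain: "forcing_chain V E S a b N" and "k < N"
  shows "S k \<noteq> S N"
proof -
  have "(a k, b k) \<in> force_attempts V E (S k)" "S (Suc k) = insert (b k) (S k)"
    using assms unfolding forcing_chain_def by auto
  then have "b k \<notin> S k" "b k \<in> S (Suc k)"
    unfolding force_attempts_def by auto
  moreover have "S (Suc k) \<subseteq> S N"
    using forcing_chain_mono[OF chain] \<open>k < N\<close> by simp
  ultimately show ?thesis by blast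
qed

text \<open>Each round moves the chain one stage further with probability \<open>p\<close>, independently of
the past, so the stage reached after \<open>t\<close> rounds is a \<open>Bin(t, p)\<close> count capped at \<open>N\<close>.\<close>

lemma wzf_dist_forcing_chain:
  assumes chain: "forcing_chain V E S a b N"
    and weight: "\<And>k. k < N \<Longrightarrow> w (a k) (b k) = p"
    and p: "0 \<le> p" "p \<le> 1"
  shows "wzf_dist V E w (S 0) t = map_pmf (\<lambda>j. S (min j N)) (binomial_pmf t p)"
proof (induction t)
  case 0
  then show ?case using p by (simp add: binomial_pmf_0)
next
  case (Suc t)
  have step: "wzf_step V E w (S (min j N)) =
      map_pmf (\<lambda>x. S (min ((if x then 1 else 0) + j) N)) (bernoulli_pmf p)" for j
  proof (cases "j < N")
    case True
    then have fa: "force_attempts V E (S j) = {(a j, b j)}"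
      and ins: "S (Suc j) = insert (b j) (S j)"
      using chain unfolding forcing_chain_def by auto
    have "wzf_step V E w (S (min j N)) =
        map_pmf (\<lambda>f. S j \<union> {v. \<exists>u. (u, v) \<in> {(a j, b j)} \<and> f (u, v)})
          (map_pmf (\<lambda>x y. if y = (a j, b j) then x else False) (bernoulli_pmf (w (a j) (b j))))"
      unfolding wzf_step_def using True fa by (simp add: Pi_pmf_singleton)
    also have "\<dots> = map_pmf (\<lambda>x. S (min ((if x then 1 else 0) + j) N)) (bernoulli_pmf p)"
      unfolding pmf.map_comp o_def using True weight[OF True] ins
      by (intro map_pmf_cong) (auto simp: Suc_le_eq)
    finally show ?thesis .
  next
    case False
    then have "min j N = N" "\<And>x. min ((if x then 1 else 0) + j) N = N" by auto
    then show ?thesis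
      using chain unfolding wzf_step_def forcing_chain_def by (simp add: map_pmf_const)
  qed
  have "wzf_dist V E w (S 0) (Suc t) = binomial_pmf t p \<bind> (\<lambda>j. wzf_step V E w (S (min j N)))"
    using Suc by (simp add: bind_map_pmf)
  also have "\<dots> = binomial_pmf t p \<bind> (\<lambda>j. bernoulli_pmf p \<bind>
        (\<lambda>x. return_pmf (S (min ((if x then 1 else 0) + j) N))))"
    by (simp add: step map_pmf_def)
  also have "\<dots> = bernoulli_pmf p \<bind> (\<lambda>x. binomial_pmf t p \<bind>
        (\<lambda>j. return_pmf (S (min ((if x then 1 else 0) + j) N))))"
    by (rule bind_commute_pmf)
  also have "\<dots> = map_pmf (\<lambda>j. S (min j N)) (binomial_pmf (Suc t) p)"
    using p by (simp add: binomial_pmf_Suc map_pmf_def bind_assoc_pmf bind_return_pmf)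
  finally show ?case .
qed

lemma prob_binomial_pmf_atLeast:
  assumes "0 \<le> p" "p \<le> 1"
  shows "measure_pmf.prob (binomial_pmf t p) {N..} =
           (\<Sum>s = N..t. real (t choose s) * p ^ s * (1 - p) ^ (t - s))"
proof -
  have "set_pmf (binomial_pmf t p) \<subseteq> {..t}"
    using assms by (auto simp: set_pmf_binomial_eq)
  then have "{N..} \<inter> set_pmf (binomial_pmf t p) = {N..t} \<inter> set_pmf (binomial_pmf t p)"
    by auto
  then have "measure_pmf.prob (binomial_pmf t p) {N..} = measure_pmf.prob (binomial_pmf t p) {N..t}"
    by (metis measure_Int_set_pmf)
  then show ?thesis using assms by (simp add: measure_measure_pmf_finite pmf_binomial)
qed

lemma prob_ptw_le_forcing_chain:
  assumes chain: "forcing_chain V E S a b N" and "S N = V"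
    and "\<And>k. k < N \<Longrightarrow> w (a k) (b k) = p" and "0 \<le> p" "p \<le> 1"
  shows "prob_ptw_le V E w (S 0) t = (\<Sum>s = N..t. real (t choose s) * p ^ s * (1 - p) ^ (t - s))"
proof -
  have "S (min j N) = V \<longleftrightarrow> N \<le> j" for j
    using forcing_chain_stage_neq_final[OF chain, of j] \<open>S N = V\<close> by (cases "N \<le> j") auto
  then have "(\<lambda>j. S (min j N)) -` {V} = {N..}" by auto
  moreover have "wzf_dist V E w (S 0) t = map_pmf (\<lambda>j. S (min j N)) (binomial_pmf t p)"
    using wzf_dist_forcing_chain[OF chain] assms(3-5) by blast
  ultimately have "prob_ptw_le V E w (S 0) t = measure_pmf.prob (binomial_pmf t p) {N..}"
    unfolding prob_ptw_le_def by simp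
  then show ?thesis using prob_binomial_pmf_atLeast assms(4,5) by simp
qed

lemma force_attempts_path_prefix:
  assumes "k < n - 1"
  shows "force_attempts (path_V n) path_E {..k} = {(k, Suc k)}"
proof -
  have "force_attempts (path_V n) path_E {..k} \<subseteq> {(k, Suc k)}"
  proof clarify
    fix u v assume "(u, v) \<in> force_attempts (path_V n) path_E {..k}"
    then have "u \<le> k" "\<not> v \<le> k" "v = Suc u \<or> u = Suc v"
      unfolding mem_force_attempts_iff path_E_def atMost_iff by blast+
    then show "u = k \<and> v = Suc k" by auto
  qed
  moreover have "(k, Suc k) \<in> force_attempts (path_V n) path_E {..k}"
  proof -
    have "\<forall>x\<in>path_V n. path_E k x \<and> x \<notin> {..k} \<longrightarrow> x = Suc k"
      unfolding path_E_def by auto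
    moreover have "Suc k \<in> path_V n" using assms unfolding path_V_def by simp
    ultimately show ?thesis unfolding mem_force_attempts_iff path_E_def by simp
  qed
  ultimately show ?thesis by blast
qed

lemma force_attempts_path_suffix:
  assumes "k < n - 1"
  shows "force_attempts (path_V n) path_E {n - 1 - k..<n} = {(n - 1 - k, n - 2 - k)}"
proof -
  have "force_attempts (path_V n) path_E {n - 1 - k..<n} \<subseteq> {(n - 1 - k, n - 2 - k)}"
  proof clarify
    fix u v assume "(u, v) \<in> force_attempts (path_V n) path_E {n - 1 - k..<n}"
    then have "n - 1 - k \<le> u" "u < n" "\<not> (n - 1 - k \<le> v \<and> v < n)" "v < n" "v = Suc u \<or> u = Suc v"
      unfolding mem_force_attempts_iff path_E_def atLeastLessThan_iff path_V_def lessThan_iff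
      by blast+
    then show "u = n - 1 - k \<and> v = n - 2 - k" by auto
  qed
  moreover have "(n - 1 - k, n - 2 - k) \<in> force_attempts (path_V n) path_E {n - 1 - k..<n}"
  proof -
    have "\<forall>x\<in>path_V n. path_E (n - 1 - k) x \<and> x \<notin> {n - 1 - k..<n} \<longrightarrow> x = n - 2 - k"
      using assms unfolding path_E_def path_V_def by auto
    moreover have "n - 1 - k \<in> {n - 1 - k..<n}" "n - 2 - k \<in> path_V n"
      "n - 2 - k \<notin> {n - 1 - k..<n}" "path_E (n - 1 - k) (n - 2 - k)"
      using assms unfolding path_V_def path_E_def by auto
    ultimately show ?thesis unfolding mem_force_attempts_iff by blast
  qed
  ultimately show ?thesis by blast
qed

lemma forcing_chain_path_prefix:
  "forcing_chain (path_V n) path_E (\<lambda>k. {..k}) id Suc (n - 1)"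
  unfolding forcing_chain_def
proof (intro conjI allI impI)
  fix k assume "k < n - 1"
  then show "force_attempts (path_V n) path_E {..k} = {(id k, Suc k)}"
    unfolding id_def by (rule force_attempts_path_prefix)
  show "{..Suc k} = insert (Suc k) {..k}" by auto
next
  show "force_attempts (path_V n) path_E {..n - 1} = {}"
  proof (cases n)
    case (Suc m)
    then have "{..n - 1} = path_V n" unfolding path_V_def by auto
    then show ?thesis by (simp add: force_attempts_all_blue)
  qed (simp add: force_attempts_def path_V_def)
qed

lemma forcing_chain_path_suffix:
  "forcing_chain (path_V n) path_E (\<lambda>k. {n - 1 - k..<n}) (\<lambda>k. n - 1 - k) (\<lambda>k. n - 2 - k) (n - 1)"
  unfolding forcing_chain_def
proof (intro conjI allI impI)
  fix k assume "k < n - 1"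
  then show "force_attempts (path_V n) path_E {n - 1 - k..<n} = {(n - 1 - k, n - 2 - k)}"
    by (rule force_attempts_path_suffix)
  show "{n - 1 - Suc k..<n} = insert (n - 2 - k) {n - 1 - k..<n}"
    using \<open>k < n - 1\<close> by auto
next
  show "force_attempts (path_V n) path_E {n - 1 - (n - 1)..<n} = {}"
    using force_attempts_all_blue by (simp add: path_V_def atLeast0LessThan)
qed

lemma prob_ptw_le_path_endpoint:
  assumes "n \<ge> 2" "0 \<le> p" "p \<le> 1" "B \<in> {{0}, {n - 1}}"
  shows "prob_ptw_le (path_V n) path_E (\<lambda>_ _. p) B t =
           (\<Sum>s = n - 1..t. real (t choose s) * p ^ s * (1 - p) ^ (t - s))"
proof -
  have "{..n - 1} = path_V n" "{n - 1 - (n - 1)..<n} = path_V n"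
    using \<open>n \<ge> 2\<close> unfolding path_V_def by auto
  note prefix = prob_ptw_le_forcing_chain[OF forcing_chain_path_prefix this(1)]
   and suffix = prob_ptw_le_forcing_chain[OF forcing_chain_path_suffix this(2)]
  have "{n - 1 - 0..<n} = {n - 1}" using \<open>n \<ge> 2\<close> by auto
  then show ?thesis
    using assms prefix[of "\<lambda>_ _. p" p t] suffix[of "\<lambda>_ _. p" p t] by auto
qed

lemma zf_closure_path_0:
  assumes "k < n"
  shows "k \<in> zf_closure (path_V n) path_E {0}"
  using assms
proof (induction k rule: less_induct)
  case (less k)
  show ?case
  proof (cases k)
    case (Suc j)
    have left_blue: "x \<in> zf_closure (path_V n) path_E {0}" if "path_E j x" "x \<noteq> k" for x
    proof (rule less.IH)
      show "x < k" "x < n" using that Suc \<open>k < n\<close> unfolding path_E_def by auto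
    qed
    show ?thesis
    proof (rule zf_closure.force[where u = j])
      show "j \<in> zf_closure (path_V n) path_E {0}"
        using Suc \<open>k < n\<close> by (intro less.IH) auto
      show "k \<in> path_V n" "path_E j k"
        using Suc \<open>k < n\<close> by (auto simp: path_V_def path_E_def)
    qed (use left_blue in blast)
  qed (simp add: zf_closure.base)
qed

text \<open>An interior vertex has two white neighbours, so it can never force.\<close>

lemma zf_closure_path_interior:
  assumes "0 < b" "b < n - 1"
  shows "zf_closure (path_V n) path_E {b} = {b}"
proof -
  have "x = b" if "x \<in> zf_closure (path_V n) path_E {b}" for x
    using that
  proof (induction rule: zf_closure.induct)
    case (force u v)
    have "b - 1 \<in> path_V n" "Suc b \<in> path_V n" "path_E b (b - 1)" "path_E b (Suc b)"
      "b - 1 \<noteq> Suc b"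
      using assms unfolding path_V_def path_E_def by auto
    then have "b - 1 = b \<or> Suc b = b"
      using force by blast
    then show ?case using assms by linarith
  qed simp
  then show ?thesis by (auto intro: zf_closure.base)
qed

lemma zero_forcing_set_path_0: "n \<ge> 1 \<Longrightarrow> zero_forcing_set (path_V n) path_E {0}"
  unfolding zero_forcing_set_def using zf_closure_path_0 by (auto simp: path_V_def)

lemma Z_num_path:
  assumes "n \<ge> 1"
  shows "Z_num (path_V n) path_E = 1"
  unfolding Z_num_def
proof (rule Min_eqI)
  have "card ` {B. zero_forcing_set (path_V n) path_E B} \<subseteq> card ` Pow (path_V n)"
    unfolding zero_forcing_set_def by auto
  then show "finite (card ` {B. zero_forcing_set (path_V n) path_E B})"
    by (rule finite_subset) (simp add: path_V_def)
  show "1 \<in> card ` {B. zero_forcing_set (path_V n) path_E B}"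
    using zero_forcing_set_path_0[OF assms] by force
next
  fix y assume "y \<in> card ` {B. zero_forcing_set (path_V n) path_E B}"
  then obtain B where B: "zero_forcing_set (path_V n) path_E B" and y: "y = card B" by auto
  have "finite B" using B finite_subset unfolding zero_forcing_set_def path_V_def by blast
  moreover have "B \<noteq> {}"
  proof
    assume "B = {}"
    then have "0 \<in> zf_closure (path_V n) path_E {}"
      using B assms unfolding zero_forcing_set_def path_V_def by auto
    then show False by (simp add: zf_closure_empty)
  qed
  ultimately show "1 \<le> y" using y by (simp add: Suc_le_eq card_gt_0_iff)
qed

lemma minimum_zero_forcing_sets_path:
  assumes "n \<ge> 2"
  shows "{B. zero_forcing_set (path_V n) path_E B \<and> card B = Z_num (path_V n) path_E} \<subseteq>
           {{0}, {n - 1}}"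
proof
  fix B assume "B \<in> {B. zero_forcing_set (path_V n) path_E B \<and> card B = Z_num (path_V n) path_E}"
  then have zfs: "zero_forcing_set (path_V n) path_E B" and "card B = 1"
    using Z_num_path assms by auto
  then obtain b where b: "B = {b}" using card_1_singletonE by blast
  have "b < n" "0 \<in> zf_closure (path_V n) path_E {b}"
    using zfs b assms unfolding zero_forcing_set_def path_V_def by auto
  then have "b = 0 \<or> b = n - 1"
    using zf_closure_path_interior[of b n] by (cases "0 < b \<and> b < n - 1") auto
  then show "B \<in> {{0}, {n - 1}}" using b by auto
qed

theorem mainTheorem9:
  fixes n :: nat and p \<alpha> :: real
  assumes "n \<ge> 2" and "0 < p" and "p < 1" and "0 < \<alpha>" and "\<alpha> < 1"
  shows "cptw (path_V n) path_E (\<lambda>_ _. p) \<alpha> =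
           (LEAST m::nat. (\<Sum>s = n - 1..m. real (m choose s) * p ^ s * (1 - p) ^ (m - s)) \<ge> \<alpha>)"
proof -
  let ?L = "LEAST m::nat. (\<Sum>s = n - 1..m. real (m choose s) * p ^ s * (1 - p) ^ (m - s)) \<ge> \<alpha>"
  let ?Bs = "{B. zero_forcing_set (path_V n) path_E B \<and> card B = Z_num (path_V n) path_E}"
  have "cptw_set (path_V n) path_E (\<lambda>_ _. p) B \<alpha> = ?L" if "B \<in> ?Bs" for B
    using minimum_zero_forcing_sets_path[OF assms(1)] that assms(1-3)
    unfolding cptw_set_def by (subst prob_ptw_le_path_endpoint) auto
  then have "(\<lambda>B. cptw_set (path_V n) path_E (\<lambda>_ _. p) B \<alpha>) ` ?Bs = (\<lambda>_. ?L) ` ?Bs"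
    by (rule image_cong[OF refl])
  also have "\<dots> = {?L}"
    using zero_forcing_set_path_0 Z_num_path assms(1) by (intro image_constant[of "{0}"]) simp
  finally show ?thesis unfolding cptw_def by simp
qed

end
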